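(* Let $\nu\in\mathbb C$. Then $J_\nu(\cdot;q^2)$ and $J_{\nu+1}(\cdot;q^2)$ have no common zero in $\mathbb C\setminus\{0\}$.
   Context: Fix $0<q<1$. For $a\in\mathbb C$ put $(a;q)_0=1$, $(a;q)_k=\prod_{i=0}^{k-1}(1-aq^i)$, $(a;q)_\infty=\prod_{i\ge0}(1-aq^i)$. For $\nu\in\mathbb C$ and $x\in\mathbb C\setminus\{0\}$ the Hahn–Exton $q$-Bessel function is $$J_\nu(x;q^2)=\frac{x^\nu}{(q^2;q^2)_\infty}\sum_{k=0}^\infty\frac{(-1)^kq^{k(k+1)}(q^{2\nu+2k+2};q^2)_\infty}{(q^2;q^2)_k}\,x^{2k},$$ with $x^\nu=\exp(\nu\operatorname{Log}x)$ (principal branch). *)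

theory Defs
  imports "HOL-Analysis.Analysis"
begin

definition qpoch :: "complex \<Rightarrow> complex \<Rightarrow> nat \<Rightarrow> complex" where
  "qpoch a q k = (\<Prod>i<k. 1 - a * q ^ i)"

definition qpoch_inf :: "complex \<Rightarrow> complex \<Rightarrow> complex" where
  "qpoch_inf a q = (\<Prod>i. 1 - a * q ^ i)"

text \<open>Hahn--Exton q-Bessel function J_nu(x;q^2), for real 0<q<1.
  Complex powr is exp (nu * ln x) with the principal logarithm; for the positive real
  base q, q powr s = exp (s * ln q).\<close>
definition hahn_exton_J :: "real \<Rightarrow> complex \<Rightarrow> complex \<Rightarrow> complex" where
  "hahn_exton_J q nu x =
     x powr nu / qpoch_inf (of_real (q^2)) (of_real (q^2)) *
     (\<Sum>k. (-1) ^ k * of_real (q ^ (k * (k + 1))) *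
            qpoch_inf (of_real q powr (2 * nu + 2 * of_nat k + 2)) (of_real (q^2)) /
            qpoch (of_real (q^2)) (of_real (q^2)) k * x ^ (2 * k))"

end

(*
  Write J_nu(x;q^2) = x^nu / (q^2;q^2)_infinity * G_c(x^2) with c = q^(2 nu), where
  G_c = hahn_exton_series q c is an entire power series. Two contiguous relations,
    G_c(z) = G_(c q^2)(z) - c q^2 G_(c q^2)(q^2 z)   and   G_c(z) - G_c(q^2 z) = -q^2 z G_(c q^2)(q^2 z),
  show that a common zero z /= 0 of G_c and G_(c q^2) is also a common zero at q^2 z, hence at
  every q^(2n) z. These zeros accumulate at 0, which is impossible for a power series with a nonzero
  coefficient; and G_c has one, because (c q^(2k+2); q^2)_infinity /= 0 as soon as |c| q^(2k+2) < 1.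
*)
theory Submission
  imports Defs "HOL-Complex_Analysis.Cauchy_Integral_Formula"
begin

lemma norm_mult_power_le:
  fixes a p :: "'a::real_normed_div_algebra"
  assumes "norm p \<le> 1"
  shows "norm (a * p ^ i) \<le> norm a"
  using assms by (simp add: norm_mult norm_power mult_left_le power_le_one)

lemma qpoch_Suc: "qpoch a p (Suc k) = qpoch a p k * (1 - a * p ^ k)"
  unfolding qpoch_def by simp

lemma norm_qpoch_ge:
  assumes "norm a \<le> 1" "norm p \<le> 1"
  shows "(1 - norm a) ^ k \<le> norm (qpoch a p k)"
proof -
  have "(1 - norm a) ^ k = (\<Prod>i<k. 1 - norm a)" by simp
  also have "\<dots> \<le> (\<Prod>i<k. norm (1 - a * p ^ i))"
  proof (rule prod_mono)
    fix i
    have "1 - norm a \<le> norm (1 - a * p ^ i)"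
      using norm_triangle_ineq2[of 1 "a * p ^ i"] norm_mult_power_le[OF assms(2), of a i] by simp
    then show "0 \<le> 1 - norm a \<and> 1 - norm a \<le> norm (1 - a * p ^ i)"
      using assms by simp
  qed
  also have "\<dots> = norm (qpoch a p k)" unfolding qpoch_def by (simp add: prod_norm)
  finally show ?thesis .
qed

lemma qpoch_nonzero:
  assumes "norm a < 1" "norm p \<le> 1"
  shows "qpoch a p k \<noteq> 0"
proof -
  have "0 < (1 - norm a) ^ k" using assms by simp
  also have "\<dots> \<le> norm (qpoch a p k)" using assms by (intro norm_qpoch_ge) auto
  finally show ?thesis by auto
qed

lemma convergent_prod_qpoch:
  fixes a p :: complex
  assumes "norm p < 1"
  shows "convergent_prod (\<lambda>i. 1 - a * p ^ i)"
proof -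
  have "summable (\<lambda>i. norm a * norm p ^ i)"
    using assms by (intro summable_mult summable_geometric) simp
  moreover have "norm ((1 - a * p ^ i) - 1) = norm a * norm p ^ i" for i
    by (simp add: norm_mult norm_power)
  ultimately have "summable (\<lambda>i. norm ((1 - a * p ^ i) - 1))"
    by simp
  then show ?thesis
    by (intro abs_convergent_prod_imp_convergent_prod summable_imp_abs_convergent_prod)
qed

lemma qpoch_inf_shift:
  assumes "norm p < 1"
  shows "qpoch_inf a p = (1 - a) * qpoch_inf (a * p) p"
proof -
  have "(\<lambda>i. 1 - (a * p) * p ^ i) has_prod qpoch_inf (a * p) p"
    unfolding qpoch_inf_def by (intro convergent_prod_has_prod convergent_prod_qpoch assms)
  then have "(\<lambda>i. 1 - a * p ^ Suc i) has_prod qpoch_inf (a * p) p"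
    by (simp add: mult.assoc)
  then have "(\<lambda>i. 1 - a * p ^ i) has_prod (qpoch_inf (a * p) p * (1 - a))"
    using has_prod_Suc_imp[of "\<lambda>i. 1 - a * p ^ i"] by simp
  then show ?thesis
    unfolding qpoch_inf_def by (simp add: has_prod_unique[symmetric] mult.commute)
qed

lemma qpoch_inf_nonzero:
  assumes "norm p < 1" "norm a < 1"
  shows "qpoch_inf a p \<noteq> 0"
  unfolding qpoch_inf_def
proof (rule prodinf_nonzero[OF convergent_prod_qpoch[OF assms(1)]])
  fix i
  show "1 - a * p ^ i \<noteq> 0"
    using norm_mult_power_le[of p a i] assms by auto
qed

lemma norm_qpoch_inf_le:
  assumes "norm p < 1"
  shows "norm (qpoch_inf a p) \<le> exp (norm a / (1 - norm p))"
proof -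
  have lim: "(\<lambda>n. norm (\<Prod>i\<le>n. 1 - a * p ^ i)) \<longlonglongrightarrow> norm (qpoch_inf a p)"
    unfolding qpoch_inf_def by (intro tendsto_norm convergent_prod_LIMSEQ convergent_prod_qpoch assms)
  have "(\<lambda>i. norm p ^ i) sums (1 / (1 - norm p))"
    using assms by (intro geometric_sums) simp
  from sums_mult[OF this, of "norm a"]
  have geom: "(\<lambda>i. norm a * norm p ^ i) sums (norm a / (1 - norm p))" by simp
  have "norm (\<Prod>i\<le>n. 1 - a * p ^ i) \<le> exp (norm a / (1 - norm p))" for n
  proof -
    have "norm (\<Prod>i\<le>n. 1 - a * p ^ i) \<le> (\<Prod>i\<le>n. exp (norm a * norm p ^ i))"
      unfolding prod_norm[symmetric]
    proof (rule prod_mono)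
      fix i
      have "norm (1 - a * p ^ i) \<le> 1 + norm a * norm p ^ i"
        using norm_triangle_ineq4[of 1 "a * p ^ i"] by (simp add: norm_mult norm_power)
      also have "\<dots> \<le> exp (norm a * norm p ^ i)" by (rule exp_ge_add_one_self)
      finally show "0 \<le> norm (1 - a * p ^ i) \<and> norm (1 - a * p ^ i) \<le> exp (norm a * norm p ^ i)"
        by simp
    qed
    also have "\<dots> = exp (\<Sum>i\<le>n. norm a * norm p ^ i)" by (simp add: exp_sum)
    also have "\<dots> \<le> exp (norm a / (1 - norm p))"
      using sum_le_suminf[OF sums_summable[OF geom], of "{..n}"] unfolding sums_unique[OF geom, symmetric]
      by simp
    finally show ?thesis .
  qed
  then show ?thesis by (intro LIMSEQ_le_const2[OF lim]) auto
qed

lemma powser_coeff_eq_0_if_zeros_tendsto_0: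
  fixes a :: "nat \<Rightarrow> 'a::{real_normed_field,banach}"
  assumes "0 < r" and summable: "\<And>z. norm z < r \<Longrightarrow> summable (\<lambda>k. a k * z ^ k)"
    and "zs \<longlonglongrightarrow> 0" "\<And>n. zs n \<noteq> 0" and zeros: "\<And>n. (\<Sum>k. a k * zs n ^ k) = 0"
  shows "a m = 0"
proof (rule ccontr)
  assume am: "a m \<noteq> 0"
  define f where "f z = (\<Sum>k. a k * z ^ k)" for z
  have "isCont f 0"
    unfolding f_def using \<open>0 < r\<close>
    by (intro isCont_powser[where K = "of_real (r / 2)"] summable) auto
  then have "(\<lambda>n. f (zs n)) \<longlonglongrightarrow> f 0"
    using \<open>zs \<longlonglongrightarrow> 0\<close> by (rule isCont_tendsto_compose)
  then have f0: "f 0 = 0"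
    using zeros unfolding f_def by (simp add: LIMSEQ_const_iff)
  then have "m > 0"
    using am unfolding f_def by (cases m) (auto simp: powser_zero)
  have sums_f: "(\<lambda>k. a k * (z - 0) ^ k) sums f z" if "norm (z - 0) < r" for z
    using summable[of z] that unfolding f_def by (simp add: summable_sums)
  obtain s where "0 < s" and s: "\<And>z. z \<in> cball 0 s - {0} \<Longrightarrow> f z \<noteq> 0"
    using powser_0_nonzero[OF \<open>0 < r\<close> sums_f f0 am \<open>m > 0\<close>] by blast
  have "(\<lambda>n. norm (zs n)) \<longlonglongrightarrow> 0"
    using \<open>zs \<longlonglongrightarrow> 0\<close> by (rule tendsto_norm_zero)
  then have "eventually (\<lambda>n. norm (zs n) < s) sequentially"
    using \<open>0 < s\<close> by (rule order_tendstoD)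
  then obtain n where "norm (zs n) < s"
    using eventually_happens'[OF sequentially_bot] by blast
  then have "f (zs n) \<noteq> 0" using s \<open>zs n \<noteq> 0\<close> by simp
  then show False using zeros unfolding f_def by simp
qed

definition hahn_exton_coeff :: "complex \<Rightarrow> complex \<Rightarrow> nat \<Rightarrow> complex" where
  "hahn_exton_coeff q c k =
     (-1) ^ k * q ^ (k * (k + 1)) * qpoch_inf (c * (q\<^sup>2) ^ Suc k) (q\<^sup>2) / qpoch (q\<^sup>2) (q\<^sup>2) k"

definition hahn_exton_series :: "complex \<Rightarrow> complex \<Rightarrow> complex \<Rightarrow> complex" where
  "hahn_exton_series q c z = (\<Sum>k. hahn_exton_coeff q c k * z ^ k)"

lemma hahn_exton_coeff_norm_le:
  assumes "norm q < 1"
  shows "norm (hahn_exton_coeff q c k)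
           \<le> exp (norm c / (1 - (norm q)\<^sup>2)) * (norm q ^ Suc k / (1 - (norm q)\<^sup>2)) ^ k"
proof -
  define B where "B = exp (norm c / (1 - (norm q)\<^sup>2))"
  have nQ: "norm (q\<^sup>2) = (norm q)\<^sup>2" "(norm q)\<^sup>2 < 1"
    using assms by (auto simp: norm_power power_less_one_iff)
  have "norm (c * (q\<^sup>2) ^ Suc k) \<le> norm c"
    using nQ by (intro norm_mult_power_le) simp
  then have "exp (norm (c * (q\<^sup>2) ^ Suc k) / (1 - norm (q\<^sup>2))) \<le> B"
    unfolding B_def nQ(1) using nQ(2) by (intro exp_mono divide_right_mono) simp_all
  then have num: "norm (qpoch_inf (c * (q\<^sup>2) ^ Suc k) (q\<^sup>2)) \<le> B"
    using norm_qpoch_inf_le[of "q\<^sup>2" "c * (q\<^sup>2) ^ Suc k"] nQ by linarith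
  have den: "(1 - (norm q)\<^sup>2) ^ k \<le> norm (qpoch (q\<^sup>2) (q\<^sup>2) k)"
    using norm_qpoch_ge[of "q\<^sup>2" "q\<^sup>2" k] nQ by simp
  have "norm (hahn_exton_coeff q c k)
        = norm q ^ (k * (k + 1)) * norm (qpoch_inf (c * (q\<^sup>2) ^ Suc k) (q\<^sup>2))
          / norm (qpoch (q\<^sup>2) (q\<^sup>2) k)"
    by (simp add: hahn_exton_coeff_def norm_mult norm_divide norm_power)
  also have "\<dots> \<le> norm q ^ (k * (k + 1)) * B / (1 - (norm q)\<^sup>2) ^ k"
    using num den nQ by (intro frac_le mult_left_mono) (auto simp: B_def)
  also have "\<dots> = B * (norm q ^ Suc k / (1 - (norm q)\<^sup>2)) ^ k"
  proof -
    have exponent: "k * (k + 1) = Suc k * k" by simp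
    show ?thesis unfolding exponent power_divide power_mult by (simp only: mult.commute times_divide_eq_right)
  qed
  finally show ?thesis unfolding B_def .
qed

lemma summable_hahn_exton_series:
  assumes "norm q < 1"
  shows "summable (\<lambda>k. hahn_exton_coeff q c k * z ^ k)"
proof -
  define B where "B = exp (norm c / (1 - (norm q)\<^sup>2))"
  define r where "r k = norm q ^ Suc k * norm z / (1 - (norm q)\<^sup>2)" for k
  have nq2: "(norm q)\<^sup>2 < 1" using assms by (simp add: power_less_one_iff)
  have bound: "norm (hahn_exton_coeff q c k * z ^ k) \<le> B * r k ^ k" for k
  proof -
    have "norm (hahn_exton_coeff q c k * z ^ k) = norm (hahn_exton_coeff q c k) * norm z ^ k"
      by (simp add: norm_mult norm_power)
    also have "\<dots> \<le> B * (norm q ^ Suc k / (1 - (norm q)\<^sup>2)) ^ k * norm z ^ k"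
      unfolding B_def by (intro mult_right_mono hahn_exton_coeff_norm_le assms) simp
    also have "\<dots> = B * r k ^ k"
      unfolding r_def by (simp add: power_mult_distrib power_divide)
    finally show ?thesis .
  qed
  have "(\<lambda>k. norm q ^ Suc k) \<longlonglongrightarrow> 0"
    using assms by (intro LIMSEQ_Suc LIMSEQ_power_zero) simp
  then have "r \<longlonglongrightarrow> 0"
    unfolding r_def by (intro tendsto_divide_zero tendsto_mult_left_zero)
  then have "eventually (\<lambda>k. r k < 1/2) sequentially"
    by (intro order_tendstoD) auto
  then have "eventually (\<lambda>k. norm (hahn_exton_coeff q c k * z ^ k) \<le> B * (1/2) ^ k) sequentially"
  proof (rule eventually_mono)
    fix k assume "r k < 1/2"
    moreover have "0 \<le> r k" using nq2 unfolding r_def by simp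
    ultimately have "r k ^ k \<le> (1/2) ^ k" by (intro power_mono) auto
    then show "norm (hahn_exton_coeff q c k * z ^ k) \<le> B * (1/2) ^ k"
      using bound[of k] unfolding B_def by (meson exp_ge_zero mult_left_mono order_trans)
  qed
  then show ?thesis
    by (rule summable_comparison_test_ev) (intro summable_mult summable_geometric, simp)
qed

lemma hahn_exton_coeff_contiguous:
  assumes "norm q < 1"
  shows "hahn_exton_coeff q c k = (1 - c * (q\<^sup>2) ^ Suc k) * hahn_exton_coeff q (c * q\<^sup>2) k"
proof -
  have "norm (q\<^sup>2) < 1" using assms by (simp add: norm_power power_less_one_iff)
  from qpoch_inf_shift[OF this, of "c * (q\<^sup>2) ^ Suc k"] show ?thesis
    by (simp add: hahn_exton_coeff_def mult_ac)
qed

lemma hahn_exton_coeff_Suc: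
  assumes "norm q < 1"
  shows "(1 - (q\<^sup>2) ^ Suc k) * hahn_exton_coeff q c (Suc k)
           = - ((q\<^sup>2) ^ Suc k * hahn_exton_coeff q (c * q\<^sup>2) k)"
proof -
  have nQ: "norm (q\<^sup>2) < 1" using assms by (simp add: norm_power power_less_one_iff)
  have "norm ((q\<^sup>2) ^ Suc k) < 1"
    using norm_mult_power_le[of "q\<^sup>2" "q\<^sup>2" k] nQ by simp
  then have nz: "1 - (q\<^sup>2) ^ Suc k \<noteq> 0" by auto
  have "qpoch (q\<^sup>2) (q\<^sup>2) k \<noteq> 0" using nQ by (intro qpoch_nonzero) auto
  moreover have "q ^ (Suc k * (Suc k + 1)) = q ^ (k * (k + 1)) * (q\<^sup>2) ^ Suc k"
  proof -
    have exponent: "Suc k * (Suc k + 1) = k * (k + 1) + 2 * Suc k" by simp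
    show ?thesis unfolding exponent power_add power_mult[of q 2 "Suc k"] ..
  qed
  ultimately show ?thesis
    using nz by (simp add: hahn_exton_coeff_def qpoch_Suc field_simps)
qed

lemma hahn_exton_series_contiguous:
  assumes "norm q < 1"
  shows "hahn_exton_series q c z
           = hahn_exton_series q (c * q\<^sup>2) z - c * q\<^sup>2 * hahn_exton_series q (c * q\<^sup>2) (q\<^sup>2 * z)"
proof -
  let ?a = "hahn_exton_coeff q (c * q\<^sup>2)"
  have "(\<lambda>k. ?a k * z ^ k - c * q\<^sup>2 * (?a k * (q\<^sup>2 * z) ^ k))
          sums (hahn_exton_series q (c * q\<^sup>2) z - c * q\<^sup>2 * hahn_exton_series q (c * q\<^sup>2) (q\<^sup>2 * z))"
    unfolding hahn_exton_series_def
    by (intro sums_diff sums_mult summable_sums summable_hahn_exton_series assms)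
  moreover have "?a k * z ^ k - c * q\<^sup>2 * (?a k * (q\<^sup>2 * z) ^ k) = hahn_exton_coeff q c k * z ^ k" for k
    unfolding hahn_exton_coeff_contiguous[OF assms, of c k] by (simp add: power_mult_distrib algebra_simps)
  ultimately show ?thesis
    unfolding hahn_exton_series_def by (simp add: sums_iff)
qed

lemma hahn_exton_series_q_difference:
  assumes "norm q < 1"
  shows "hahn_exton_series q c z - hahn_exton_series q c (q\<^sup>2 * z)
           = - (q\<^sup>2 * z) * hahn_exton_series q (c * q\<^sup>2) (q\<^sup>2 * z)"
proof -
  define h where "h k = hahn_exton_coeff q c k * z ^ k - hahn_exton_coeff q c k * (q\<^sup>2 * z) ^ k" for k
  have "h (Suc k) = - (q\<^sup>2 * z) * (hahn_exton_coeff q (c * q\<^sup>2) k * (q\<^sup>2 * z) ^ k)" for k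
  proof -
    have "h (Suc k) = (1 - (q\<^sup>2) ^ Suc k) * hahn_exton_coeff q c (Suc k) * z ^ Suc k"
      unfolding h_def by (simp add: power_mult_distrib algebra_simps)
    then show ?thesis
      unfolding hahn_exton_coeff_Suc[OF assms] by (simp add: power_mult_distrib algebra_simps)
  qed
  then have "(\<lambda>k. h (Suc k)) sums (- (q\<^sup>2 * z) * hahn_exton_series q (c * q\<^sup>2) (q\<^sup>2 * z))"
    unfolding hahn_exton_series_def
    by (simp only:) (intro sums_mult summable_sums summable_hahn_exton_series assms)
  moreover have "h 0 = 0" by (simp add: h_def)
  ultimately have "h sums (- (q\<^sup>2 * z) * hahn_exton_series q (c * q\<^sup>2) (q\<^sup>2 * z))"
    by (simp add: sums_Suc_iff)
  moreover have "h sums (hahn_exton_series q c z - hahn_exton_series q c (q\<^sup>2 * z))"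
    unfolding h_def hahn_exton_series_def
    by (intro sums_diff summable_sums summable_hahn_exton_series assms)
  ultimately show ?thesis by (rule sums_unique2[symmetric])
qed

lemma hahn_exton_series_common_zero_shift:
  assumes "norm q < 1" "q \<noteq> 0" "c \<noteq> 0"
    and "hahn_exton_series q c z = 0" "hahn_exton_series q (c * q\<^sup>2) z = 0"
  shows "hahn_exton_series q c (q\<^sup>2 * z) = 0 \<and> hahn_exton_series q (c * q\<^sup>2) (q\<^sup>2 * z) = 0"
proof
  have "0 = 0 - c * q\<^sup>2 * hahn_exton_series q (c * q\<^sup>2) (q\<^sup>2 * z)"
    using hahn_exton_series_contiguous[OF assms(1), of c z] unfolding assms(4,5) .
  then show shifted: "hahn_exton_series q (c * q\<^sup>2) (q\<^sup>2 * z) = 0"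
    using assms(2,3) by simp
  have "0 - hahn_exton_series q c (q\<^sup>2 * z) = - (q\<^sup>2 * z) * 0"
    using hahn_exton_series_q_difference[OF assms(1), of c z] unfolding assms(4) shifted .
  then show "hahn_exton_series q c (q\<^sup>2 * z) = 0" by simp
qed

lemma hahn_exton_coeff_nonzero:
  assumes "norm q < 1" "q \<noteq> 0"
  shows "\<exists>k. hahn_exton_coeff q c k \<noteq> 0"
proof -
  have nQ: "norm (q\<^sup>2) < 1" using assms by (simp add: norm_power power_less_one_iff)
  then have "(\<lambda>k. norm c * norm (q\<^sup>2) ^ Suc k) \<longlonglongrightarrow> 0"
    by (intro tendsto_mult_right_zero LIMSEQ_Suc LIMSEQ_power_zero) simp
  then have "eventually (\<lambda>k. norm c * norm (q\<^sup>2) ^ Suc k < 1) sequentially"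
    by (rule order_tendstoD) simp
  then obtain k where "norm c * norm (q\<^sup>2) ^ Suc k < 1"
    using eventually_happens'[OF sequentially_bot] by blast
  then have "qpoch_inf (c * (q\<^sup>2) ^ Suc k) (q\<^sup>2) \<noteq> 0"
    using nQ by (intro qpoch_inf_nonzero) (simp_all add: norm_mult norm_power)
  moreover have "qpoch (q\<^sup>2) (q\<^sup>2) k \<noteq> 0" using nQ by (intro qpoch_nonzero) auto
  ultimately have "hahn_exton_coeff q c k \<noteq> 0"
    using assms(2) by (simp add: hahn_exton_coeff_def)
  then show ?thesis ..
qed

theorem hahn_exton_series_no_common_zero:
  assumes "norm q < 1" "q \<noteq> 0" "c \<noteq> 0" "z \<noteq> 0"
  shows "\<not> (hahn_exton_series q c z = 0 \<and> hahn_exton_series q (c * q\<^sup>2) z = 0)"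
proof
  assume "hahn_exton_series q c z = 0 \<and> hahn_exton_series q (c * q\<^sup>2) z = 0"
  then have zeros: "hahn_exton_series q c ((q\<^sup>2) ^ n * z) = 0
                    \<and> hahn_exton_series q (c * q\<^sup>2) ((q\<^sup>2) ^ n * z) = 0" for n
  proof (induction n)
    case (Suc n)
    then have "hahn_exton_series q c (q\<^sup>2 * ((q\<^sup>2) ^ n * z)) = 0
               \<and> hahn_exton_series q (c * q\<^sup>2) (q\<^sup>2 * ((q\<^sup>2) ^ n * z)) = 0"
      by (intro hahn_exton_series_common_zero_shift[OF assms(1-3)]) simp_all
    then show ?case unfolding power_Suc mult.assoc .
  qed simp
  have "norm (q\<^sup>2) < 1" using assms by (simp add: norm_power power_less_one_iff)
  then have lim: "(\<lambda>n. (q\<^sup>2) ^ n * z) \<longlonglongrightarrow> 0"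
    by (intro tendsto_mult_left_zero LIMSEQ_power_zero)
  have "hahn_exton_coeff q c k = 0" for k
  proof (rule powser_coeff_eq_0_if_zeros_tendsto_0[where r = 1, OF _ _ lim])
    show "summable (\<lambda>k. hahn_exton_coeff q c k * w ^ k)" for w
      by (rule summable_hahn_exton_series[OF assms(1)])
    show "(q\<^sup>2) ^ n * z \<noteq> 0" for n
      using assms(2,4) by simp
    show "(\<Sum>k. hahn_exton_coeff q c k * ((q\<^sup>2) ^ n * z) ^ k) = 0" for n
      using zeros[of n] unfolding hahn_exton_series_def by (rule conjunct1)
  qed simp
  with hahn_exton_coeff_nonzero[OF assms(1,2)] show False by blast
qed

lemma hahn_exton_J_eq_series:
  assumes "0 < q"
  shows "hahn_exton_J q nu x = x powr nu / qpoch_inf ((of_real q)\<^sup>2) ((of_real q)\<^sup>2)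
           * hahn_exton_series (of_real q) (of_real q powr (2 * nu)) (x\<^sup>2)"
proof -
  have exponent: "of_real q powr (2 * nu + 2 * of_nat k + 2)
                    = of_real q powr (2 * nu) * ((of_real q)\<^sup>2) ^ Suc k" for k
  proof -
    have sum: "2 * nu + 2 * of_nat k + 2 = 2 * nu + of_nat (2 * Suc k)" by simp
    have "(of_real q :: complex) powr of_nat (2 * Suc k) = of_real q ^ (2 * Suc k)"
      using assms by (intro powr_nat') simp
    also have "\<dots> = ((of_real q)\<^sup>2) ^ Suc k" by (rule power_mult)
    finally have "(of_real q :: complex) powr of_nat (2 * Suc k) = ((of_real q)\<^sup>2) ^ Suc k" .
    then show ?thesis unfolding sum powr_add by simp
  qed
  show ?thesis
    unfolding hahn_exton_J_def hahn_exton_series_def hahn_exton_coeff_def exponent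
    by (simp add: power_mult)
qed

theorem proposition3p8:
  fixes q :: real and nu :: complex
  assumes "0 < q" and "q < 1"
  shows "\<not> (\<exists>x::complex. x \<noteq> 0 \<and> hahn_exton_J q nu x = 0 \<and> hahn_exton_J q (nu + 1) x = 0)"
proof
  assume "\<exists>x::complex. x \<noteq> 0 \<and> hahn_exton_J q nu x = 0 \<and> hahn_exton_J q (nu + 1) x = 0"
  then obtain x :: complex where x: "x \<noteq> 0" "hahn_exton_J q nu x = 0" "hahn_exton_J q (nu + 1) x = 0"
    by blast
  define c where "c = (of_real q :: complex) powr (2 * nu)"
  have norm_q: "norm (of_real q :: complex) < 1" "norm ((of_real q :: complex)\<^sup>2) < 1"
    using assms by (simp_all add: norm_power power_less_one_iff)
  have c_succ: "of_real q powr (2 * (nu + 1)) = c * (of_real q)\<^sup>2"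
    using assms unfolding c_def by (simp add: distrib_left powr_add)
  have "x powr nu / qpoch_inf ((of_real q)\<^sup>2) ((of_real q)\<^sup>2) \<noteq> 0"
       "x powr (nu + 1) / qpoch_inf ((of_real q)\<^sup>2) ((of_real q)\<^sup>2) \<noteq> 0"
    using x(1) qpoch_inf_nonzero[OF norm_q(2) norm_q(2)] by simp_all
  then have zeros: "hahn_exton_series (of_real q) c (x\<^sup>2) = 0"
                   "hahn_exton_series (of_real q) (c * (of_real q)\<^sup>2) (x\<^sup>2) = 0"
    using x(2,3) unfolding hahn_exton_J_eq_series[OF assms(1)] c_def c_succ by simp_all
  have nonzero: "of_real q \<noteq> (0 :: complex)" "c \<noteq> 0" "x\<^sup>2 \<noteq> 0"
    using assms x(1) unfolding c_def by simp_all
  show False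
    using hahn_exton_series_no_common_zero[OF norm_q(1) nonzero] zeros by simp
qed

end
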